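(* Let $\widetilde{\Sigma}_1,\ldots,\widetilde{\Sigma}_n$ be pairwise disjoint visibly pushdown alphabets and $\widetilde{\Sigma}=\widetilde{\Sigma}_1\uplus\cdots\uplus\widetilde{\Sigma}_n$. If $L_i\subseteq\widetilde{\Sigma}_i^*$ is a visibly pushdown language for each $i$, then the well-nested shuffle $L_1\bowtie\cdots\bowtie L_n$ is a visibly pushdown language over $\widetilde{\Sigma}$.
   Context: A visibly pushdown (VP) alphabet is a finite alphabet partitioned into calls, returns and internals; $\widetilde{\Sigma}$ has as calls/returns/internals the unions of those of the $\widetilde{\Sigma}_i$. A visibly pushdown automaton is a pushdown automaton with bottom symbol $\bot$ that pushes one non-$\bot$ symbol on each call, pops the top symbol on each return (reading $\bot$ on empty stack without removing it), and does not touch the stack on internals; a visibly pushdown language is one accepted by such an automaton. In a word, calls and returns are matched like opening and closing parentheses (internals ignored). A word over $\widetilde{\Sigma}$ is well-nested if every matched call–return pair consists of two letters from the same $\widetilde{\Sigma}_k$. The shuffle $L_1\parallel\cdots\parallel L_n$ is $\{w\in\widetilde{\Sigma}^*:\Pi_{\widetilde{\Sigma}_i}(w)\in L_i\text{ for all }i\}$, where $\Pi_{\widetilde{\Sigma}_i}$ erases letters not in $\widetilde{\Sigma}_i$; the well-nested shuffle $L_1\bowtie\cdots\bowtie L_n$ is the set of well-nested words in $L_1\parallel\cdots\parallel L_n$. *)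

theory Defs
  imports Main
begin

type_synonym 'a vpalph = "'a set \<times> 'a set \<times> 'a set"

definition calls :: "'a vpalph \<Rightarrow> 'a set" where "calls S = fst S"
definition rets :: "'a vpalph \<Rightarrow> 'a set" where "rets S = fst (snd S)"
definition ints :: "'a vpalph \<Rightarrow> 'a set" where "ints S = snd (snd S)"
definition letters :: "'a vpalph \<Rightarrow> 'a set" where
  "letters S = calls S \<union> rets S \<union> ints S"

definition vp_alphabet :: "'a vpalph \<Rightarrow> bool" where
  "vp_alphabet S \<longleftrightarrow> finite (letters S) \<and>
     calls S \<inter> rets S = {} \<and> calls S \<inter> ints S = {} \<and> rets S \<inter> ints S = {}"

definition union_alph :: "nat \<Rightarrow> (nat \<Rightarrow> 'a vpalph) \<Rightarrow> 'a vpalph" where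
  "union_alph n S = ((\<Union>i<n. calls (S i)), (\<Union>i<n. rets (S i)), (\<Union>i<n. ints (S i)))"

text \<open>States and (non-bottom) stack symbols are natural numbers (w.l.o.g.); the stack
  is a list of non-bottom symbols, the empty list standing for the stack containing only
  the bottom symbol; in return transitions, \<open>None\<close> denotes the bottom symbol.\<close>
record 'a vpa =
  states :: "nat set"
  init :: "nat set"
  final :: "nat set"
  stack :: "nat set"
  dcall :: "(nat \<times> 'a \<times> nat \<times> nat) set"
  dret :: "(nat \<times> 'a \<times> nat option \<times> nat) set"
  dint :: "(nat \<times> 'a \<times> nat) set"

definition vpa_wf :: "'a vpalph \<Rightarrow> 'a vpa \<Rightarrow> bool" where
  "vpa_wf S A \<longleftrightarrow> finite (states A) \<and> finite (stack A) \<and>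
     init A \<subseteq> states A \<and> final A \<subseteq> states A \<and>
     (\<forall>(q,a,q',g) \<in> dcall A. q \<in> states A \<and> a \<in> calls S \<and> q' \<in> states A \<and> g \<in> stack A) \<and>
     (\<forall>(q,a,g,q') \<in> dret A. q \<in> states A \<and> a \<in> rets S \<and> q' \<in> states A \<and>
         (\<forall>h. g = Some h \<longrightarrow> h \<in> stack A)) \<and>
     (\<forall>(q,a,q') \<in> dint A. q \<in> states A \<and> a \<in> ints S \<and> q' \<in> states A)"

definition vpa_step :: "'a vpalph \<Rightarrow> 'a vpa \<Rightarrow> 'a \<Rightarrow> nat \<times> nat list \<Rightarrow> nat \<times> nat list \<Rightarrow> bool" where
  "vpa_step S A a c c' \<longleftrightarrow>
     (a \<in> calls S \<and> (\<exists>g. (fst c, a, fst c', g) \<in> dcall A \<and> snd c' = g # snd c)) \<or>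
     (a \<in> rets S \<and> ((snd c = [] \<and> snd c' = [] \<and> (fst c, a, None, fst c') \<in> dret A) \<or>
                    (\<exists>g. snd c = g # snd c' \<and> (fst c, a, Some g, fst c') \<in> dret A))) \<or>
     (a \<in> ints S \<and> (fst c, a, fst c') \<in> dint A \<and> snd c' = snd c)"

fun vpa_run :: "'a vpalph \<Rightarrow> 'a vpa \<Rightarrow> 'a list \<Rightarrow> nat \<times> nat list \<Rightarrow> nat \<times> nat list \<Rightarrow> bool" where
  "vpa_run S A [] c c' \<longleftrightarrow> c' = c"
| "vpa_run S A (a # w) c c' \<longleftrightarrow> (\<exists>c''. vpa_step S A a c c'' \<and> vpa_run S A w c'' c')"

definition vpa_lang :: "'a vpalph \<Rightarrow> 'a vpa \<Rightarrow> 'a list set" where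
  "vpa_lang S A = {w. \<exists>q0 \<in> init A. \<exists>qf \<in> final A. \<exists>s. vpa_run S A w (q0, []) (qf, s)}"

definition vpl :: "'a vpalph \<Rightarrow> 'a list set \<Rightarrow> bool" where
  "vpl S L \<longleftrightarrow> (\<exists>A. vpa_wf S A \<and> vpa_lang S A = L)"

inductive well_matched :: "'a vpalph \<Rightarrow> 'a list \<Rightarrow> bool" for S where
  wm_nil: "well_matched S []"
| wm_int: "a \<in> ints S \<Longrightarrow> well_matched S w \<Longrightarrow> well_matched S (a # w)"
| wm_pair: "a \<in> calls S \<Longrightarrow> b \<in> rets S \<Longrightarrow> well_matched S u \<Longrightarrow> well_matched S v \<Longrightarrow>
            well_matched S (a # u @ b # v)"

definition matched :: "'a vpalph \<Rightarrow> 'a list \<Rightarrow> nat \<Rightarrow> nat \<Rightarrow> bool" where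
  "matched S w i j \<longleftrightarrow> i < j \<and> j < length w \<and> w ! i \<in> calls S \<and> w ! j \<in> rets S \<and>
     well_matched S (take (j - i - 1) (drop (i + 1) w))"

definition well_nested :: "nat \<Rightarrow> (nat \<Rightarrow> 'a vpalph) \<Rightarrow> 'a list \<Rightarrow> bool" where
  "well_nested n S w \<longleftrightarrow> (\<forall>i j. matched (union_alph n S) w i j \<longrightarrow>
      (\<exists>k<n. w ! i \<in> letters (S k) \<and> w ! j \<in> letters (S k)))"

definition shuffle :: "nat \<Rightarrow> (nat \<Rightarrow> 'a vpalph) \<Rightarrow> (nat \<Rightarrow> 'a list set) \<Rightarrow> 'a list set" where
  "shuffle n S L = {w \<in> lists (letters (union_alph n S)).
      \<forall>i<n. filter (\<lambda>a. a \<in> letters (S i)) w \<in> L i}"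

definition wn_shuffle :: "nat \<Rightarrow> (nat \<Rightarrow> 'a vpalph) \<Rightarrow> (nat \<Rightarrow> 'a list set) \<Rightarrow> 'a list set" where
  "wn_shuffle n S L = {w \<in> shuffle n S L. well_nested n S w}"

end

theory Submission
  imports Defs "HOL-Library.Countable"
begin

text \<open>Run all component automata in parallel: a letter moves the unique component it belongs
  to, and the product stack holds the component stack symbols tagged with their component. A
  component may only pop a symbol carrying its own tag (or read the bottom), so every return
  accepted by the product is matched with a call of its own component, i.e. the accepted words
  are well-nested. Conversely, on a well-nested word the top of the product stack always belongs
  to the innermost pending call, which is matched with the next return and hence lies in the
  same component, so no return is ever blocked.\<close>

lemma vpa_run_append:
  "vpa_run S A (u @ v) c c' \<longleftrightarrow> (\<exists>c''. vpa_run S A u c c'' \<and> vpa_run S A v c'' c')"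
  by (induction u arbitrary: c) auto

lemma vpa_wfD:
  assumes "vpa_wf S A"
  shows "init A \<subseteq> states A" "final A \<subseteq> states A" "finite (states A)" "finite (stack A)"
    and "(q, a, q', g) \<in> dcall A \<Longrightarrow> a \<in> calls S \<and> q' \<in> states A \<and> g \<in> stack A"
    and "(q, a, og, q') \<in> dret A \<Longrightarrow> a \<in> rets S \<and> q' \<in> states A \<and> set_option og \<subseteq> stack A"
    and "(q, a, q') \<in> dint A \<Longrightarrow> a \<in> ints S \<and> q' \<in> states A"
  using assms unfolding vpa_wf_def by (simp_all add: case_prod_beta) fastforce+

lemma well_matched_append:
  "well_matched S u \<Longrightarrow> well_matched S v \<Longrightarrow> well_matched S (u @ v)"
  by (induction u rule: well_matched.induct) (auto intro: well_matched.intros)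

lemma vp_alphabet_union_alph:
  assumes "\<And>i. i < n \<Longrightarrow> vp_alphabet (S i)"
    and "\<And>i j. i < n \<Longrightarrow> j < n \<Longrightarrow> i \<noteq> j \<Longrightarrow> letters (S i) \<inter> letters (S j) = {}"
  shows "vp_alphabet (union_alph n S)"
  using assms unfolding vp_alphabet_def union_alph_def letters_def calls_def rets_def ints_def
  by simp blast

lemma vpa_run_well_matched_stack:
  assumes "vp_alphabet S" "well_matched S u" "vpa_run S A u c c'"
  shows "snd c' = snd c"
  using assms(2,3)
proof (induction u arbitrary: c c' rule: well_matched.induct)
  case wm_nil
  then show ?case by simp
next
  case (wm_int a w)
  then obtain c1 where "vpa_step S A a c c1" "vpa_run S A w c1 c'" by auto
  with wm_int assms(1) show ?case
    unfolding vpa_step_def vp_alphabet_def by auto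
next
  case (wm_pair a b u v)
  then obtain c1 c2 c3 where s1: "vpa_step S A a c c1" and r1: "vpa_run S A u c1 c2"
    and s2: "vpa_step S A b c2 c3" and r2: "vpa_run S A v c3 c'"
    by (auto simp: vpa_run_append)
  from s1 wm_pair.hyps(1) assms(1) obtain g where "snd c1 = g # snd c"
    unfolding vpa_step_def vp_alphabet_def by blast
  with wm_pair.IH(1)[OF r1] s2 wm_pair.hyps(2) assms(1) have "snd c3 = snd c"
    unfolding vpa_step_def vp_alphabet_def by auto
  with wm_pair.IH(2)[OF r2] show ?case by simp
qed

section \<open>Matching and pending calls\<close>

definition push_pop :: "'a vpalph \<Rightarrow> 'a \<Rightarrow> 'a list \<Rightarrow> 'a list" where
  "push_pop S a s = (if a \<in> calls S then a # s else if a \<in> rets S then tl s else s)"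

definition pending :: "'a vpalph \<Rightarrow> 'a list \<Rightarrow> 'a list" where
  "pending S w = fold (push_pop S) w []"

lemma pending_Nil [simp]: "pending S [] = []"
  by (simp add: pending_def)

lemma pending_snoc [simp]: "pending S (x @ [a]) = push_pop S a (pending S x)"
  by (simp add: pending_def)

lemma pending_ConsD:
  assumes "set x \<subseteq> letters S" "pending S x = c # cs"
  shows "\<exists>x1 u. x = x1 @ c # u \<and> c \<in> calls S \<and> well_matched S u \<and> pending S x1 = cs"
  using assms
proof (induction "length x" arbitrary: x c cs rule: less_induct)
  case less
  then obtain y a where x: "x = y @ [a]"
    by (cases x rule: rev_cases) auto
  have y: "set y \<subseteq> letters S" and a: "a \<in> letters S"
    using less.prems(1) x by auto
  consider "a \<in> calls S" | "a \<notin> calls S" "a \<in> rets S" | "a \<in> ints S" "a \<notin> calls S" "a \<notin> rets S"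
    using a unfolding letters_def by blast
  then show ?case
  proof cases
    case 1
    with less.prems(2) x show ?thesis
      by (auto simp: push_pop_def intro: wm_nil)
  next
    case 2
    \<comment> \<open>the return \<open>a\<close> closes the innermost pending call \<open>d\<close> of \<open>y\<close>\<close>
    with less.prems(2) x obtain d where yd: "pending S y = d # c # cs"
      by (cases "pending S y") (auto simp: push_pop_def)
    from less.hyps[of y d "c # cs"] x y yd obtain y1 u1 where
      y1: "y = y1 @ d # u1" "d \<in> calls S" "well_matched S u1" "pending S y1 = c # cs"
      by auto
    from less.hyps[of y1 c cs] x y y1 obtain y2 u2 where
      y2: "y1 = y2 @ c # u2" "c \<in> calls S" "well_matched S u2" "pending S y2 = cs"
      by auto
    have "well_matched S (u2 @ d # u1 @ [a])"
      using y1 y2 2 by (intro well_matched_append wm_pair wm_nil)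
    with x y1 y2 show ?thesis
      by (intro exI[of _ y2] exI[of _ "u2 @ d # u1 @ [a]"]) auto
  next
    case 3
    with less.prems(2) x have "pending S y = c # cs"
      by (simp add: push_pop_def)
    from less.hyps[of y c cs] this x y obtain y1 u1 where
      y1: "y = y1 @ c # u1" "c \<in> calls S" "well_matched S u1" "pending S y1 = cs"
      by auto
    have "well_matched S (u1 @ [a])"
      using y1(3) 3 by (intro well_matched_append wm_int wm_nil)
    with x y1 show ?thesis
      by (intro exI[of _ y1] exI[of _ "u1 @ [a]"]) auto
  qed
qed

lemma matchedE:
  assumes "matched S w i j"
  obtains u where "w = take i w @ w ! i # u @ w ! j # drop (Suc j) w"
    and "w ! i \<in> calls S" "w ! j \<in> rets S" "well_matched S u"
proof
  define u where "u = take (j - i - 1) (drop (i + 1) w)"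
  from assms show "w ! i \<in> calls S" "w ! j \<in> rets S" "well_matched S u"
    by (simp_all add: matched_def u_def)
  from assms have ij: "i < j" "j < length w"
    by (simp_all add: matched_def)
  then have "drop (Suc i) w = u @ w ! j # drop (Suc j) w"
    using append_take_drop_id[of "j - Suc i" "drop (Suc i) w"]
    by (simp add: u_def Cons_nth_drop_Suc)
  then have "take i w @ w ! i # drop (Suc i) w = take i w @ w ! i # u @ w ! j # drop (Suc j) w"
    by (simp only:)
  moreover have "w = take i w @ w ! i # drop (Suc i) w"
    using ij by (intro id_take_nth_drop) simp
  ultimately show "w = take i w @ w ! i # u @ w ! j # drop (Suc j) w"
    by (rule trans[rotated])
qed

lemma well_nested_pendingD:
  assumes "well_nested n S (x @ a # y)" "set x \<subseteq> letters (union_alph n S)"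
    and "a \<in> rets (union_alph n S)" "pending (union_alph n S) x = c # cs"
  shows "\<exists>k<n. c \<in> letters (S k) \<and> a \<in> letters (S k)"
proof -
  from pending_ConsD[OF assms(2,4)] obtain x1 u where
    x: "x = x1 @ c # u" "c \<in> calls (union_alph n S)" "well_matched (union_alph n S) u"
    by blast
  then have "matched (union_alph n S) (x @ a # y) (length x1) (length x)"
    using assms(3) by (simp add: matched_def nth_append)
  moreover have "(x @ a # y) ! length x1 = c" "(x @ a # y) ! length x = a"
    using x(1) by (simp_all add: nth_append)
  ultimately show ?thesis
    using assms(1) unfolding well_nested_def by metis
qed

section \<open>The product automaton\<close>

locale vpa_product =
  fixes n :: nat and S :: "nat \<Rightarrow> 'a vpalph" and A :: "nat \<Rightarrow> 'a vpa"
  assumes vp_alphabet: "\<And>i. i < n \<Longrightarrow> vp_alphabet (S i)"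
    and letters_disjoint: "\<And>i j. i < n \<Longrightarrow> j < n \<Longrightarrow> i \<noteq> j \<Longrightarrow> letters (S i) \<inter> letters (S j) = {}"
    and vpa_wf: "\<And>i. i < n \<Longrightarrow> vpa_wf (S i) (A i)"
begin

abbreviation Sig :: "'a vpalph" where "Sig \<equiv> union_alph n S"

abbreviation word_of :: "nat \<Rightarrow> 'a list \<Rightarrow> 'a list" where
  "word_of i w \<equiv> filter (\<lambda>a. a \<in> letters (S i)) w"

definition stack_of :: "nat \<Rightarrow> (nat \<times> nat) list \<Rightarrow> nat list" where
  "stack_of i ps = map snd (filter (\<lambda>p. fst p = i) ps)"

lemma stack_of_simps [simp]:
  "stack_of i [] = []"
  "stack_of i ((j, g) # ps) = (if j = i then g # stack_of i ps else stack_of i ps)"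
  by (simp_all add: stack_of_def)

definition tuples :: "nat list set" where
  "tuples = {qs. length qs = n \<and> (\<forall>i<n. qs ! i \<in> states (A i))}"

definition product :: "'a vpa" where
  "product = \<lparr>states = to_nat ` tuples,
    init = to_nat ` {qs \<in> tuples. \<forall>i<n. qs ! i \<in> init (A i)},
    final = to_nat ` {qs \<in> tuples. \<forall>i<n. qs ! i \<in> final (A i)},
    stack = to_nat ` (SIGMA i:{..<n}. stack (A i)),
    dcall = {(to_nat qs, a, to_nat (qs[i := q']), to_nat (i, g)) | qs i a q' g.
               qs \<in> tuples \<and> i < n \<and> (qs ! i, a, q', g) \<in> dcall (A i)},
    dret = {(to_nat qs, a, map_option (\<lambda>g. to_nat (i, g)) og, to_nat (qs[i := q'])) | qs i a og q'.
               qs \<in> tuples \<and> i < n \<and> (qs ! i, a, og, q') \<in> dret (A i)},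
    dint = {(to_nat qs, a, to_nat (qs[i := q'])) | qs i a q'.
               qs \<in> tuples \<and> i < n \<and> (qs ! i, a, q') \<in> dint (A i)}\<rparr>"

lemma letters_Sig: "letters Sig = (\<Union>i<n. letters (S i))"
  and calls_Sig: "calls Sig = (\<Union>i<n. calls (S i))"
  and rets_Sig: "rets Sig = (\<Union>i<n. rets (S i))"
  and ints_Sig: "ints Sig = (\<Union>i<n. ints (S i))"
  by (auto simp: union_alph_def calls_def rets_def ints_def letters_def)

lemma vp_alphabet_Sig: "vp_alphabet Sig"
  using vp_alphabet letters_disjoint by (rule vp_alphabet_union_alph)

lemma component_unique:
  "k < n \<Longrightarrow> m < n \<Longrightarrow> a \<in> letters (S k) \<Longrightarrow> a \<in> letters (S m) \<Longrightarrow> k = m"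
  using letters_disjoint by blast

lemma calls_Sig_iff: "k < n \<Longrightarrow> a \<in> letters (S k) \<Longrightarrow> a \<in> calls Sig \<longleftrightarrow> a \<in> calls (S k)"
  and rets_Sig_iff: "k < n \<Longrightarrow> a \<in> letters (S k) \<Longrightarrow> a \<in> rets Sig \<longleftrightarrow> a \<in> rets (S k)"
  using component_unique unfolding calls_Sig rets_Sig letters_def by blast+

lemma finite_tuples: "finite tuples"
proof -
  have "tuples \<subseteq> {qs. set qs \<subseteq> (\<Union>i<n. states (A i)) \<and> length qs = n}"
    by (fastforce simp: tuples_def in_set_conv_nth)
  moreover have "finite (\<Union>i<n. states (A i))"
    using vpa_wfD(3)[OF vpa_wf] by blast
  ultimately show ?thesis
    using finite_lists_length_eq finite_subset by blast
qed

lemma tuples_update: "qs \<in> tuples \<Longrightarrow> i < n \<Longrightarrow> q' \<in> states (A i) \<Longrightarrow> qs[i := q'] \<in> tuples"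
  by (auto simp: tuples_def nth_list_update)

lemma vpa_wf_product: "vpa_wf Sig product"
  unfolding vpa_wf_def
proof (intro conjI)
  note wf = vpa_wfD[OF vpa_wf]
  show "finite (stack product)"
    using wf(4) by (auto simp: product_def intro!: finite_imageI finite_SigmaI)
  show "\<forall>(q, a, q', g) \<in> dcall product. q \<in> states product \<and> a \<in> calls Sig \<and>
      q' \<in> states product \<and> g \<in> stack product"
    using wf(5) tuples_update by (clarsimp simp: product_def calls_Sig) blast
  show "\<forall>(q, a, g, q') \<in> dret product. q \<in> states product \<and> a \<in> rets Sig \<and>
      q' \<in> states product \<and> (\<forall>h. g = Some h \<longrightarrow> h \<in> stack product)"
    using wf(6) tuples_update by (clarsimp simp: product_def rets_Sig) blast
  show "\<forall>(q, a, q') \<in> dint product. q \<in> states product \<and> a \<in> ints Sig \<and> q' \<in> states product"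
    using wf(7) tuples_update by (clarsimp simp: product_def ints_Sig) blast
qed (use finite_tuples vpa_wfD(1,2)[OF vpa_wf] in \<open>auto simp: product_def tuples_def\<close>)

definition stack_move :: "nat \<Rightarrow> 'a \<Rightarrow> (nat \<times> nat) list \<Rightarrow> (nat \<times> nat) list \<Rightarrow> bool" where
  "stack_move k a ps ps' \<longleftrightarrow>
     a \<in> calls (S k) \<and> (\<exists>g. ps' = (k, g) # ps) \<or>
     a \<in> rets (S k) \<and> (ps = [] \<and> ps' = [] \<or> (\<exists>g. ps = (k, g) # ps')) \<or>
     a \<in> ints (S k) \<and> ps' = ps"

lemma stack_move_other: "stack_move k a ps ps' \<Longrightarrow> i \<noteq> k \<Longrightarrow> stack_of i ps' = stack_of i ps"
  by (auto simp: stack_move_def)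

lemma component_disjoint:
  "k < n \<Longrightarrow> calls (S k) \<inter> rets (S k) = {} \<and> calls (S k) \<inter> ints (S k) = {} \<and> rets (S k) \<inter> ints (S k) = {}"
  using vp_alphabet by (simp add: vp_alphabet_def)

lemma product_stepD:
  assumes "vpa_step Sig product a (to_nat qs, map to_nat ps) c" "qs \<in> tuples"
  shows "\<exists>k q' ps'. k < n \<and> a \<in> letters (S k) \<and> c = (to_nat (qs[k := q']), map to_nat ps') \<and>
    qs[k := q'] \<in> tuples \<and> vpa_step (S k) (A k) a (qs ! k, stack_of k ps) (q', stack_of k ps') \<and>
    stack_move k a ps ps'"
proof -
  note wf = vpa_wfD[OF vpa_wf]
  from assms(1) consider
      (call) g where "(to_nat qs, a, fst c, g) \<in> dcall product" "snd c = g # map to_nat ps"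
    | (bottom) "(to_nat qs, a, None, fst c) \<in> dret product" "ps = []" "snd c = []"
    | (pop) g where "(to_nat qs, a, Some g, fst c) \<in> dret product" "map to_nat ps = g # snd c"
    | (int) "(to_nat qs, a, fst c) \<in> dint product" "snd c = map to_nat ps"
    unfolding vpa_step_def by auto
  then show ?thesis
  proof cases
    case call
    then obtain k q' g where k: "k < n" "(qs ! k, a, q', g) \<in> dcall (A k)"
      and c: "c = (to_nat (qs[k := q']), map to_nat ((k, g) # ps))"
      by (auto simp: product_def prod_eq_iff)
    show ?thesis
      using k c wf(5)[OF k] component_disjoint[OF k(1)] assms(2) tuples_update
      by (intro exI[of _ k] exI[of _ q'] exI[of _ "(k, g) # ps"])
        (auto simp: vpa_step_def stack_move_def letters_def)
  next
    case bottom
    then obtain k q' where k: "k < n" "(qs ! k, a, None, q') \<in> dret (A k)"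
      and c: "c = (to_nat (qs[k := q']), map to_nat [])"
      by (auto simp: product_def prod_eq_iff)
    show ?thesis
      using k c bottom(2) wf(6)[OF k] component_disjoint[OF k(1)] assms(2) tuples_update
      by (intro exI[of _ k] exI[of _ q'] exI[of _ "[]"])
        (auto simp: vpa_step_def stack_move_def letters_def)
  next
    case pop
    then obtain k q' g' ps' where k: "k < n" "(qs ! k, a, Some g', q') \<in> dret (A k)"
      and c: "c = (to_nat (qs[k := q']), map to_nat ps')" and ps: "ps = (k, g') # ps'"
      by (cases ps) (auto simp: product_def prod_eq_iff eq_commute[of "Some _" "map_option _ _"])
    show ?thesis
      using k c ps wf(6)[OF k] component_disjoint[OF k(1)] assms(2) tuples_update
      by (intro exI[of _ k] exI[of _ q'] exI[of _ ps'])
        (auto simp: vpa_step_def stack_move_def letters_def)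
  next
    case int
    then obtain k q' where k: "k < n" "(qs ! k, a, q') \<in> dint (A k)"
      and c: "c = (to_nat (qs[k := q']), map to_nat ps)"
      by (auto simp: product_def prod_eq_iff)
    show ?thesis
      using k c wf(7)[OF k] component_disjoint[OF k(1)] assms(2) tuples_update
      by (intro exI[of _ k] exI[of _ q'] exI[of _ ps])
        (auto simp: vpa_step_def stack_move_def letters_def)
  qed
qed

lemma product_stepI:
  assumes "qs \<in> tuples" "k < n" "vpa_step (S k) (A k) a (qs ! k, stack_of k ps) (q', \<sigma>')"
    and "a \<in> rets (S k) \<Longrightarrow> ps = [] \<or> fst (hd ps) = k"
  shows "\<exists>ps'. vpa_step Sig product a (to_nat qs, map to_nat ps) (to_nat (qs[k := q']), map to_nat ps') \<and>
    qs[k := q'] \<in> tuples \<and> stack_of k ps' = \<sigma>' \<and> stack_move k a ps ps'"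
proof -
  note wf = vpa_wfD[OF vpa_wf[OF assms(2)]]
  have Sig: "calls (S k) \<subseteq> calls Sig" "rets (S k) \<subseteq> rets Sig" "ints (S k) \<subseteq> ints Sig"
    using assms(2) by (auto simp: calls_Sig rets_Sig ints_Sig)
  from assms(3) consider
      (call) g where "a \<in> calls (S k)" "(qs ! k, a, q', g) \<in> dcall (A k)" "\<sigma>' = g # stack_of k ps"
    | (bottom) "a \<in> rets (S k)" "(qs ! k, a, None, q') \<in> dret (A k)" "stack_of k ps = []" "\<sigma>' = []"
    | (pop) g where "a \<in> rets (S k)" "(qs ! k, a, Some g, q') \<in> dret (A k)" "stack_of k ps = g # \<sigma>'"
    | (int) "a \<in> ints (S k)" "(qs ! k, a, q') \<in> dint (A k)" "\<sigma>' = stack_of k ps"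
    unfolding vpa_step_def by auto
  then show ?thesis
  proof cases
    case call
    then show ?thesis
      using assms(1,2) Sig wf(5) tuples_update
      by (intro exI[of _ "(k, g) # ps"]) (fastforce simp: vpa_step_def stack_move_def product_def)
  next
    case bottom
    with assms(4) have "ps = []"
      by (cases ps) auto
    then show ?thesis
      using bottom assms(1,2) Sig wf(6) tuples_update
      by (intro exI[of _ "[]"]) (fastforce simp: vpa_step_def stack_move_def product_def)
  next
    case pop
    with assms(4) obtain ps' where ps: "ps = (k, g) # ps'" "\<sigma>' = stack_of k ps'"
      by (cases ps) auto
    have "(to_nat qs, a, Some (to_nat (k, g)), to_nat (qs[k := q'])) \<in> dret product"
      using pop assms(1,2) unfolding product_def by force
    then show ?thesis
      using pop ps assms(1,2) Sig wf(6) tuples_update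
      by (intro exI[of _ ps']) (auto simp: vpa_step_def stack_move_def)
  next
    case int
    then show ?thesis
      using assms(1,2) Sig wf(7) tuples_update
      by (intro exI[of _ ps]) (fastforce simp: vpa_step_def stack_move_def product_def)
  qed
qed

lemma product_runD:
  assumes "vpa_run Sig product w (to_nat qs, map to_nat ps) c" "qs \<in> tuples"
  shows "\<exists>qs' ps'. c = (to_nat qs', map to_nat ps') \<and> qs' \<in> tuples \<and> set w \<subseteq> letters Sig \<and>
    (\<forall>i<n. vpa_run (S i) (A i) (word_of i w) (qs ! i, stack_of i ps) (qs' ! i, stack_of i ps'))"
  using assms
proof (induction w arbitrary: qs ps)
  case Nil
  then show ?case by auto
next
  case (Cons a w)
  then obtain c1 where step: "vpa_step Sig product a (to_nat qs, map to_nat ps) c1"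
    and run: "vpa_run Sig product w c1 c"
    by auto
  from product_stepD[OF step Cons.prems(2)] obtain k q' ps1 where
    k: "k < n" "a \<in> letters (S k)" and c1: "c1 = (to_nat (qs[k := q']), map to_nat ps1)"
    and qs1: "qs[k := q'] \<in> tuples"
    and step_k: "vpa_step (S k) (A k) a (qs ! k, stack_of k ps) (q', stack_of k ps1)"
    and move: "stack_move k a ps ps1"
    by blast
  from Cons.IH[OF run[unfolded c1] qs1] obtain qs' ps' where
    IH: "c = (to_nat qs', map to_nat ps')" "qs' \<in> tuples" "set w \<subseteq> letters Sig"
      "\<forall>i<n. vpa_run (S i) (A i) (word_of i w) (qs[k := q'] ! i, stack_of i ps1) (qs' ! i, stack_of i ps')"
    by blast
  have "length qs = n"
    using Cons.prems(2) by (simp add: tuples_def)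
  have "vpa_run (S i) (A i) (word_of i (a # w)) (qs ! i, stack_of i ps) (qs' ! i, stack_of i ps')"
    if "i < n" for i
  proof (cases "i = k")
    case True
    have "vpa_run (S k) (A k) (word_of k w) (q', stack_of k ps1) (qs' ! k, stack_of k ps')"
      using IH(4)[rule_format, OF k(1)] k(1) \<open>length qs = n\<close> by simp
    with True k(2) step_k show ?thesis
      by auto
  next
    case False
    with component_unique[OF k(1) that k(2)] IH(4) that stack_move_other[OF move] show ?thesis
      by auto
  qed
  with IH(1-3) k show ?case
    by (auto simp: letters_Sig)
qed

lemma product_run_well_nested:
  fixes ps :: "(nat \<times> nat) list"
  assumes "vpa_run Sig product w (to_nat qs, map to_nat ps) c" "qs \<in> tuples"
  shows "well_nested n S w"
  unfolding well_nested_def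
proof (intro allI impI)
  fix i j
  assume "matched Sig w i j"
  then obtain u where w: "w = take i w @ w ! i # u @ w ! j # drop (Suc j) w"
    and ij: "w ! i \<in> calls Sig" "w ! j \<in> rets Sig" and u: "well_matched Sig u"
    by (rule matchedE)
  with assms(1) have "vpa_run Sig product (take i w @ w ! i # u @ w ! j # drop (Suc j) w)
      (to_nat qs, map to_nat ps) c"
    by (simp only:)
  then obtain c1 c2 c3 c4 where
    r1: "vpa_run Sig product (take i w) (to_nat qs, map to_nat ps) c1"
    and s1: "vpa_step Sig product (w ! i) c1 c2" and r2: "vpa_run Sig product u c2 c3"
    and s2: "vpa_step Sig product (w ! j) c3 c4"
    unfolding vpa_run_append vpa_run.simps(2) by blast
  from product_runD[OF r1 assms(2)] obtain qs1 and ps1 :: "(nat \<times> nat) list" where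
    c1: "c1 = (to_nat qs1, map to_nat ps1)" "qs1 \<in> tuples"
    by blast
  from product_stepD[OF s1[unfolded c1(1)] c1(2)] obtain k q2 ps2 where
    k: "k < n" "w ! i \<in> letters (S k)" and c2: "c2 = (to_nat (qs1[k := q2]), map to_nat ps2)"
    and qs2: "qs1[k := q2] \<in> tuples" and push: "stack_move k (w ! i) ps1 ps2"
    by blast
  \<comment> \<open>the symbol tagged \<open>k\<close> pushed at \<open>i\<close> is on top again at \<open>j\<close>\<close>
  from push ij(1) calls_Sig_iff[OF k] component_disjoint[OF k(1)]
  obtain g where ps2: "ps2 = (k, g) # ps1"
    by (auto simp: stack_move_def)
  from product_runD[OF r2[unfolded c2] qs2] obtain qs3 and ps3 :: "(nat \<times> nat) list" where
    c3: "c3 = (to_nat qs3, map to_nat ps3)" "qs3 \<in> tuples"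
    by blast
  have "ps3 = ps2"
    using vpa_run_well_matched_stack[OF vp_alphabet_Sig u r2] c2 c3
    by (simp add: inj_map_eq_map)
  from product_stepD[OF s2[unfolded c3(1)] c3(2)] obtain k' ps4 where
    k': "k' < n" "w ! j \<in> letters (S k')" and pop: "stack_move k' (w ! j) ps3 ps4"
    by blast
  from pop ij(2) rets_Sig_iff[OF k'] component_disjoint[OF k'(1)] \<open>ps3 = ps2\<close> ps2 have "k' = k"
    by (auto simp: stack_move_def)
  with k k' show "\<exists>k<n. w ! i \<in> letters (S k) \<and> w ! j \<in> letters (S k)"
    by blast
qed

definition stack_tags :: "(nat \<times> nat) list \<Rightarrow> 'a list \<Rightarrow> bool" where
  "stack_tags ps cs \<longleftrightarrow> list_all2 (\<lambda>p c. fst p < n \<and> c \<in> letters (S (fst p))) ps cs"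

lemma stack_tags_move:
  assumes "stack_tags ps (pending Sig x)" "k < n" "a \<in> letters (S k)" "stack_move k a ps ps'"
  shows "stack_tags ps' (pending Sig (x @ [a]))"
proof -
  have tl: "stack_tags (tl ps) (tl (pending Sig x))"
    using assms(1) unfolding stack_tags_def
    by (cases ps; cases "pending Sig x") auto
  from assms(4) consider "a \<in> calls (S k)" "\<exists>g. ps' = (k, g) # ps" | "a \<in> rets (S k)" "ps' = tl ps"
    | "a \<in> ints (S k)" "ps' = ps"
    unfolding stack_move_def by force
  then show ?thesis
  proof cases
    case 1
    with assms(1-3) calls_Sig_iff[OF assms(2,3)] show ?thesis
      by (auto simp: stack_tags_def push_pop_def)
  next
    case 2
    with tl component_disjoint[OF assms(2)] calls_Sig_iff[OF assms(2,3)]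
      rets_Sig_iff[OF assms(2,3)] show ?thesis
      by (auto simp: push_pop_def)
  next
    case 3
    with assms(1) component_disjoint[OF assms(2)] calls_Sig_iff[OF assms(2,3)]
      rets_Sig_iff[OF assms(2,3)] show ?thesis
      by (auto simp: push_pop_def)
  qed
qed

lemma stack_tags_return:
  assumes "stack_tags ps (pending Sig x)" "well_nested n S (x @ a # y)" "set x \<subseteq> letters Sig"
    and "k < n" "a \<in> rets (S k)"
  shows "ps = [] \<or> fst (hd ps) = k"
proof (cases ps)
  case (Cons p ps')
  with assms(1) obtain c cs where "pending Sig x = c # cs" "fst p < n" "c \<in> letters (S (fst p))"
    unfolding stack_tags_def by (cases "pending Sig x") auto
  moreover have "a \<in> rets Sig" "a \<in> letters (S k)"
    using assms(4,5) by (auto simp: rets_Sig letters_def)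
  ultimately show ?thesis
    using well_nested_pendingD[OF assms(2,3)] assms(4) Cons by (metis component_unique list.sel(1))
qed simp

lemma product_run_complete:
  assumes "well_nested n S (x @ w)" "set (x @ w) \<subseteq> letters Sig" "stack_tags ps (pending Sig x)"
    and "qs \<in> tuples" "length qs' = n"
    and "\<forall>i<n. \<exists>\<sigma>. vpa_run (S i) (A i) (word_of i w) (qs ! i, stack_of i ps) (qs' ! i, \<sigma>)"
  shows "\<exists>c. vpa_run Sig product w (to_nat qs, map to_nat ps) (to_nat qs', c)"
  using assms
proof (induction w arbitrary: x qs ps)
  case Nil
  then have "qs = qs'"
    by (auto simp: tuples_def intro: nth_equalityI)
  then show ?case by simp
next
  case (Cons a w)
  from Cons.prems(2) obtain k where k: "k < n" "a \<in> letters (S k)"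
    by (auto simp: letters_Sig)
  from Cons.prems(6) k obtain q' \<sigma>' \<sigma> where
    step_k: "vpa_step (S k) (A k) a (qs ! k, stack_of k ps) (q', \<sigma>')"
    and run_k: "vpa_run (S k) (A k) (word_of k w) (q', \<sigma>') (qs' ! k, \<sigma>)"
    by force
  have "a \<in> rets (S k) \<Longrightarrow> ps = [] \<or> fst (hd ps) = k"
    using stack_tags_return[OF Cons.prems(3)] Cons.prems(1,2) k(1) by auto
  from product_stepI[OF Cons.prems(4) k(1) step_k this] obtain ps1 where
    step: "vpa_step Sig product a (to_nat qs, map to_nat ps) (to_nat (qs[k := q']), map to_nat ps1)"
    and qs1: "qs[k := q'] \<in> tuples" and ps1: "stack_of k ps1 = \<sigma>'" and move: "stack_move k a ps ps1"
    by blast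
  have "\<exists>\<sigma>. vpa_run (S i) (A i) (word_of i w) (qs[k := q'] ! i, stack_of i ps1) (qs' ! i, \<sigma>)"
    if "i < n" for i
  proof (cases "i = k")
    case True
    with run_k ps1 Cons.prems(4) k(1) show ?thesis
      by (auto simp: tuples_def)
  next
    case False
    then have "a \<notin> letters (S i)"
      using component_unique[OF k(1) that k(2)] by blast
    with False Cons.prems(6)[rule_format, OF that] stack_move_other[OF move] show ?thesis
      by auto
  qed
  moreover have "stack_tags ps1 (pending Sig (x @ [a]))"
    using stack_tags_move[OF Cons.prems(3) k move] .
  ultimately obtain c where "vpa_run Sig product w (to_nat (qs[k := q']), map to_nat ps1) (to_nat qs', c)"
    using Cons.IH[where x = "x @ [a]" and qs = "qs[k := q']" and ps = ps1] Cons.prems(1,2,5) qs1 by auto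
  with step show ?case
    by auto
qed

lemma product_acceptsD:
  assumes "w \<in> vpa_lang Sig product"
  shows "set w \<subseteq> letters Sig" "well_nested n S w" "\<forall>i<n. word_of i w \<in> vpa_lang (S i) (A i)"
proof -
  from assms obtain qs0 qsf s where qs0: "qs0 \<in> tuples" "\<forall>i<n. qs0 ! i \<in> init (A i)"
    and qsf: "\<forall>i<n. qsf ! i \<in> final (A i)"
    and run: "vpa_run Sig product w (to_nat qs0, map to_nat ([] :: (nat \<times> nat) list)) (to_nat qsf, s)"
    unfolding vpa_lang_def by (auto simp: product_def)
  from product_runD[OF run qs0(1)] obtain ps' where
    "set w \<subseteq> letters Sig"
    and runs: "\<forall>i<n. vpa_run (S i) (A i) (word_of i w) (qs0 ! i, []) (qsf ! i, stack_of i ps')"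
    by auto
  then show "set w \<subseteq> letters Sig" "\<forall>i<n. word_of i w \<in> vpa_lang (S i) (A i)"
    using qs0(2) qsf unfolding vpa_lang_def by fastforce+
  show "well_nested n S w"
    using product_run_well_nested[OF run qs0(1)] .
qed

lemma product_acceptsI:
  assumes "set w \<subseteq> letters Sig" "well_nested n S w" "\<forall>i<n. word_of i w \<in> vpa_lang (S i) (A i)"
  shows "w \<in> vpa_lang Sig product"
proof -
  from assms(3) obtain q0 qf where
    init: "\<forall>i<n. q0 i \<in> init (A i)" and final: "\<forall>i<n. qf i \<in> final (A i)"
    and runs: "\<forall>i<n. \<exists>\<sigma>. vpa_run (S i) (A i) (word_of i w) (q0 i, []) (qf i, \<sigma>)"
    unfolding vpa_lang_def mem_Collect_eq by metis
  define qs0 where "qs0 = map q0 [0..<n]"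
  define qsf where "qsf = map qf [0..<n]"
  have "qs0 \<in> tuples" "qsf \<in> tuples"
    using init final vpa_wfD(1,2)[OF vpa_wf] by (fastforce simp: tuples_def qs0_def qsf_def)+
  moreover have "stack_tags [] (pending Sig [])"
    by (simp add: stack_tags_def)
  ultimately obtain c where "vpa_run Sig product w (to_nat qs0, map to_nat []) (to_nat qsf, c)"
    using product_run_complete[of "[]" w "[]" qs0 qsf] assms(1,2) runs by (auto simp: qs0_def qsf_def)
  moreover have "to_nat qs0 \<in> init product" "to_nat qsf \<in> final product"
    using \<open>qs0 \<in> tuples\<close> \<open>qsf \<in> tuples\<close> init final
    by (auto simp: product_def qs0_def qsf_def)
  ultimately show ?thesis
    unfolding vpa_lang_def by auto
qed

lemma vpa_lang_product:
  assumes "\<And>i. i < n \<Longrightarrow> vpa_lang (S i) (A i) = L i"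
  shows "vpa_lang Sig product = wn_shuffle n S L"
  using product_acceptsD product_acceptsI assms by (auto simp: wn_shuffle_def shuffle_def subset_code(1))

end

theorem theorem4p2:
  fixes n :: nat and S :: "nat \<Rightarrow> 'a vpalph" and L :: "nat \<Rightarrow> 'a list set"
  assumes "\<And>i. i < n \<Longrightarrow> vp_alphabet (S i)"
    and "\<And>i j. i < n \<Longrightarrow> j < n \<Longrightarrow> i \<noteq> j \<Longrightarrow> letters (S i) \<inter> letters (S j) = {}"
    and "\<And>i. i < n \<Longrightarrow> L i \<subseteq> lists (letters (S i))"
    and "\<And>i. i < n \<Longrightarrow> vpl (S i) (L i)"
  shows "vpl (union_alph n S) (wn_shuffle n S L)"
proof -
  from assms(4) obtain A where A: "\<And>i. i < n \<Longrightarrow> vpa_wf (S i) (A i) \<and> vpa_lang (S i) (A i) = L i"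
    unfolding vpl_def by metis
  interpret vpa_product n S A
    using assms(1,2) A by unfold_locales auto
  show ?thesis
    unfolding vpl_def using vpa_wf_product vpa_lang_product A by blast
qed

end
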